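(* Let $G$ be a finite simple graph with at least one edge such that $\chi(G) > \frac{\Delta(G)}{2} + 1$. Then ${\rm vs}_{\chi}(G) = {\rm es}_{\chi}(G)$.
   Context: $\chi(G)$ is the chromatic number and $\Delta(G)$ the maximum degree of $G$. The chromatic vertex stability number ${\rm vs}_{\chi}(G)$ is the minimum number of vertices of $G$ whose deletion results in a graph $H$ with $\chi(H) = \chi(G)-1$. The chromatic edge stability number ${\rm es}_{\chi}(G)$ is the minimum number of edges of $G$ whose deletion results in a graph $H$ with $\chi(H) = \chi(G)-1$. *)

theory Defs
  imports Complex_Main
begin

definition simple_graph :: "'a set \<Rightarrow> 'a set set \<Rightarrow> bool" where
  "simple_graph V E \<longleftrightarrow> finite V \<and>
     (\<forall>e\<in>E. \<exists>u v. u \<noteq> v \<and> u \<in> V \<and> v \<in> V \<and> e = {u, v})"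

definition colourable :: "'a set \<Rightarrow> 'a set set \<Rightarrow> nat \<Rightarrow> bool" where
  "colourable V E k \<longleftrightarrow> (\<exists>f :: 'a \<Rightarrow> nat. (\<forall>v\<in>V. f v < k) \<and>
     (\<forall>u v. {u, v} \<in> E \<longrightarrow> u \<noteq> v \<longrightarrow> f u \<noteq> f v))"

definition chromatic_number :: "'a set \<Rightarrow> 'a set set \<Rightarrow> nat" where
  "chromatic_number V E = (LEAST k. colourable V E k)"

definition degree :: "'a set set \<Rightarrow> 'a \<Rightarrow> nat" where
  "degree E v = card {e \<in> E. v \<in> e}"

definition max_degree :: "'a set \<Rightarrow> 'a set set \<Rightarrow> nat" where
  "max_degree V E = Max (degree E ` V)"

definition delete_vertices :: "'a set \<Rightarrow> 'a set set \<Rightarrow> 'a set \<Rightarrow> 'a set set" where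
  "delete_vertices V E S = {e \<in> E. e \<inter> S = {}}"

definition vs_chi :: "'a set \<Rightarrow> 'a set set \<Rightarrow> nat" where
  "vs_chi V E = (LEAST k. \<exists>S. S \<subseteq> V \<and> card S = k \<and>
      chromatic_number (V - S) (delete_vertices V E S) = chromatic_number V E - 1)"

definition es_chi :: "'a set \<Rightarrow> 'a set set \<Rightarrow> nat" where
  "es_chi V E = (LEAST k. \<exists>F. F \<subseteq> E \<and> card F = k \<and>
      chromatic_number V (E - F) = chromatic_number V E - 1)"

end

theory Submission
  imports Defs
begin

text \<open>
  Deleting one endpoint of each edge of an optimal edge set destroys at least those edges, so
  \<open>vs\<^sub>\<chi>(G) \<le> es\<^sub>\<chi>(G)\<close> for every graph. Conversely, let \<open>S\<close> be an optimal vertex set, so that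
  \<open>G - S\<close> has a colouring with \<open>m = \<chi>(G) - 1\<close> colours, and put the vertices of \<open>S\<close> back one at
  a time. A vertex has at most \<open>\<Delta>(G) < 2m\<close> neighbours, so some colour occurs at most once among
  its already coloured neighbours; give the vertex that colour and delete the at most one edge
  in conflict. This yields an \<open>m\<close>-colourable spanning subgraph after deleting at most \<open>|S|\<close> edges.
  Since deleting a vertex or an edge lowers the chromatic number by at most one, every deletion
  set that brings it down to \<open>\<chi>(G) - 1\<close> or below contains one that reaches \<open>\<chi>(G) - 1\<close> exactly.
\<close>

lemma simple_graph_finite_vertices: "simple_graph V E \<Longrightarrow> finite V"
  unfolding simple_graph_def by simp

lemma simple_graph_edgeE:
  assumes "simple_graph V E" "e \<in> E"
  obtains u v where "u \<noteq> v" "u \<in> V" "v \<in> V" "e = {u, v}"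
  using assms unfolding simple_graph_def by blast

lemma simple_graph_edge_subset: "simple_graph V E \<Longrightarrow> e \<in> E \<Longrightarrow> e \<subseteq> V"
  by (erule simple_graph_edgeE) auto

lemma simple_graph_finite_edges:
  assumes "simple_graph V E"
  shows "finite E"
proof (rule finite_subset)
  show "E \<subseteq> Pow V"
    using simple_graph_edge_subset[OF assms] by blast
  show "finite (Pow V)"
    using simple_graph_finite_vertices[OF assms] by simp
qed

lemma simple_graph_Diff_edges: "simple_graph V E \<Longrightarrow> simple_graph V (E - F)"
  unfolding simple_graph_def by blast

lemma simple_graph_delete_vertices:
  assumes "simple_graph V E"
  shows "simple_graph (V - S) (delete_vertices V E S)"
proof -
  have "\<exists>u v. u \<noteq> v \<and> u \<in> V - S \<and> v \<in> V - S \<and> e = {u, v}"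
    if "e \<in> delete_vertices V E S" for e
    using that by (auto simp: delete_vertices_def elim!: simple_graph_edgeE[OF assms])
  then show ?thesis
    using simple_graph_finite_vertices[OF assms] by (simp add: simple_graph_def)
qed

lemma delete_vertices_empty [simp]: "delete_vertices V E {} = E"
  unfolding delete_vertices_def by simp

lemma delete_vertices_all: "simple_graph V E \<Longrightarrow> delete_vertices V E V = {}"
  unfolding delete_vertices_def by (blast elim: simple_graph_edgeE)

lemma colourable_mono:
  "colourable V E k \<Longrightarrow> V' \<subseteq> V \<Longrightarrow> E' \<subseteq> E \<Longrightarrow> colourable V' E' k"
  unfolding colourable_def by blast

lemma colourable_insert_vertex:
  assumes "colourable W E' c"
    and "\<forall>e\<in>E. e \<subseteq> insert a W"
    and "\<forall>e\<in>E - E'. a \<in> e"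
  shows "colourable (insert a W) E (Suc c)"
proof -
  obtain f where f_lt: "\<forall>v\<in>W. f v < c"
    and f_proper: "\<forall>u v. {u, v} \<in> E' \<longrightarrow> u \<noteq> v \<longrightarrow> f u \<noteq> f v"
    using assms(1) unfolding colourable_def by blast
  have "(f(a := c)) u \<noteq> (f(a := c)) v" if "{u, v} \<in> E" "u \<noteq> v" for u v
  proof (cases "a \<in> {u, v}")
    case True
    have "u \<in> insert a W" "v \<in> insert a W"
      using assms(2) that(1) by auto
    with True that(2) consider "u = a" "v \<in> W" "v \<noteq> a" | "v = a" "u \<in> W" "u \<noteq> a"
      by auto
    then show ?thesis
      using f_lt by cases auto
  next
    case False
    then have "{u, v} \<in> E'"
      using assms(3) that(1) by (meson DiffI)
    then show ?thesis
      using f_proper False that(2) by auto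
  qed
  moreover have "\<forall>v\<in>insert a W. (f(a := c)) v < Suc c"
    using f_lt less_Suc_eq by auto
  ultimately show ?thesis
    unfolding colourable_def by (intro exI[of _ "f(a := c)"] conjI allI impI) auto
qed

lemma chromatic_number_le: "colourable V E k \<Longrightarrow> chromatic_number V E \<le> k"
  unfolding chromatic_number_def by (rule Least_le)

lemma colourable_chromatic_number:
  assumes "simple_graph V E"
  shows "colourable V E (chromatic_number V E)"
proof -
  obtain h where h: "bij_betw h V {0..<card V}"
    using ex_bij_betw_finite_nat simple_graph_finite_vertices[OF assms] by blast
  have "h u \<noteq> h v" if "{u, v} \<in> E" "u \<noteq> v" for u v
    using h that simple_graph_edge_subset[OF assms that(1)]
    unfolding bij_betw_def inj_on_def by blast
  moreover have "\<forall>v\<in>V. h v < card V"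
    using bij_betwE[OF h] by simp
  ultimately have "colourable V E (card V)"
    unfolding colourable_def by blast
  then show ?thesis
    unfolding chromatic_number_def by (rule LeastI)
qed

lemma chromatic_number_ge_2:
  assumes "simple_graph V E" "E \<noteq> {}"
  shows "2 \<le> chromatic_number V E"
proof -
  obtain u v where uv: "u \<noteq> v" "u \<in> V" "v \<in> V" "{u, v} \<in> E"
    using assms by (metis all_not_in_conv simple_graph_edgeE)
  obtain f where f: "\<forall>w\<in>V. f w < chromatic_number V E" "f u \<noteq> f v"
    using colourable_chromatic_number[OF assms(1)] uv unfolding colourable_def by blast
  then have "f u < chromatic_number V E" "f v < chromatic_number V E"
    using uv by auto
  then show ?thesis
    using f(2) by linarith
qed

lemma chromatic_number_le_Suc_delete_edge:
  assumes "simple_graph V E"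
  shows "chromatic_number V E \<le> Suc (chromatic_number V (E - {e}))"
proof (cases "e \<in> E")
  case True
  then obtain u v where "u \<in> V" "e = {u, v}"
    using assms by (blast elim: simple_graph_edgeE)
  then have "colourable (insert u V) E (Suc (chromatic_number V (E - {e})))"
    using simple_graph_edge_subset[OF assms]
    by (intro colourable_insert_vertex[OF colourable_chromatic_number[OF simple_graph_Diff_edges]])
      (auto simp: assms)
  then show ?thesis
    using \<open>u \<in> V\<close> by (simp add: chromatic_number_le insert_absorb)
qed simp

lemma chromatic_number_le_Suc_delete_vertex:
  assumes "simple_graph V E"
  shows "chromatic_number V E \<le> Suc (chromatic_number (V - {x}) (delete_vertices V E {x}))"
proof -
  have "colourable (insert x (V - {x})) E
      (Suc (chromatic_number (V - {x}) (delete_vertices V E {x})))"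
    using simple_graph_edge_subset[OF assms]
    by (intro colourable_insert_vertex
        [OF colourable_chromatic_number[OF simple_graph_delete_vertices[OF assms]]])
      (auto simp: delete_vertices_def)
  then show ?thesis
    by (intro chromatic_number_le) (auto elim: colourable_mono)
qed

subsection \<open>Deletion sets reaching the chromatic number exactly\<close>

lemma finite_subset_intermediate_value:
  fixes g :: "'a set \<Rightarrow> nat"
  assumes "finite S"
    and "\<And>x T. x \<in> S \<Longrightarrow> T \<subseteq> S \<Longrightarrow> g T \<le> Suc (g (insert x T))"
    and "g S \<le> c" "c \<le> g {}"
  shows "\<exists>T\<subseteq>S. g T = c"
  using assms
proof (induction S rule: finite_induct)
  case empty
  then show ?case by auto
next
  case (insert x S)
  show ?case
  proof (cases "g S \<le> c")
    case True
    then have "\<exists>T\<subseteq>S. g T = c"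
      using insert.prems by (intro insert.IH) blast+
    then show ?thesis by blast
  next
    case False
    then have "g (insert x S) = c"
      using insert.prems(1)[of x S] insert.prems(2) by fastforce
    then show ?thesis by blast
  qed
qed

lemma ex_edge_deletion_chromatic_number_eq:
  assumes "simple_graph V E" "F \<subseteq> E"
    and "chromatic_number V (E - F) \<le> chromatic_number V E - 1"
  shows "\<exists>F'\<subseteq>F. chromatic_number V (E - F') = chromatic_number V E - 1"
proof (rule finite_subset_intermediate_value[where g = "\<lambda>F. chromatic_number V (E - F)"])
  show "finite F"
    using assms(2) simple_graph_finite_edges[OF assms(1)] finite_subset by blast
  show "chromatic_number V (E - T) \<le> Suc (chromatic_number V (E - insert e T))" for e T
  proof -
    have "E - insert e T = E - T - {e}"
      by blast
    then show ?thesis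
      using chromatic_number_le_Suc_delete_edge[OF simple_graph_Diff_edges[OF assms(1)]] by simp
  qed
qed (use assms(3) in simp_all)

lemma ex_vertex_deletion_chromatic_number_eq:
  assumes "simple_graph V E" "S \<subseteq> V"
    and "chromatic_number (V - S) (delete_vertices V E S) \<le> chromatic_number V E - 1"
  shows "\<exists>S'\<subseteq>S. chromatic_number (V - S') (delete_vertices V E S') = chromatic_number V E - 1"
proof (rule finite_subset_intermediate_value
    [where g = "\<lambda>S. chromatic_number (V - S) (delete_vertices V E S)"])
  show "finite S"
    using assms(2) simple_graph_finite_vertices[OF assms(1)] finite_subset by blast
  show "chromatic_number (V - T) (delete_vertices V E T)
      \<le> Suc (chromatic_number (V - insert x T) (delete_vertices V E (insert x T)))" for x T
  proof -
    have "V - insert x T = V - T - {x}"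
      by blast
    moreover have "delete_vertices V E (insert x T)
        = delete_vertices (V - T) (delete_vertices V E T) {x}"
      unfolding delete_vertices_def by blast
    ultimately show ?thesis
      using chromatic_number_le_Suc_delete_vertex[OF simple_graph_delete_vertices[OF assms(1)]]
      by simp
  qed
qed (use assms(3) in simp_all)

lemma es_chi_le:
  assumes "simple_graph V E" "F \<subseteq> E"
    and "chromatic_number V (E - F) \<le> chromatic_number V E - 1"
  shows "es_chi V E \<le> card F"
proof -
  obtain F' where F': "F' \<subseteq> F" "chromatic_number V (E - F') = chromatic_number V E - 1"
    using ex_edge_deletion_chromatic_number_eq[OF assms] by blast
  then have "es_chi V E \<le> card F'"
    unfolding es_chi_def using assms(2) by (intro Least_le) blast
  also have "\<dots> \<le> card F"
    using F'(1) assms(2) simple_graph_finite_edges[OF assms(1)]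
    by (meson card_mono finite_subset)
  finally show ?thesis .
qed

lemma vs_chi_le:
  assumes "simple_graph V E" "S \<subseteq> V"
    and "chromatic_number (V - S) (delete_vertices V E S) \<le> chromatic_number V E - 1"
  shows "vs_chi V E \<le> card S"
proof -
  obtain S' where S': "S' \<subseteq> S"
      "chromatic_number (V - S') (delete_vertices V E S') = chromatic_number V E - 1"
    using ex_vertex_deletion_chromatic_number_eq[OF assms] by blast
  then have "vs_chi V E \<le> card S'"
    unfolding vs_chi_def using assms(2) by (intro Least_le) blast
  also have "\<dots> \<le> card S"
    using S'(1) assms(2) simple_graph_finite_vertices[OF assms(1)]
    by (meson card_mono finite_subset)
  finally show ?thesis .
qed

lemma es_chi_witness:
  assumes "simple_graph V E" "E \<noteq> {}"
  obtains F where "F \<subseteq> E" "card F = es_chi V E"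
    "chromatic_number V (E - F) = chromatic_number V E - 1"
proof -
  have "colourable V (E - E) 1"
    unfolding colourable_def by (intro exI[of _ "\<lambda>_. 0"]) simp
  then have "chromatic_number V (E - E) \<le> chromatic_number V E - 1"
    using chromatic_number_ge_2[OF assms] chromatic_number_le by fastforce
  then have "\<exists>k F. F \<subseteq> E \<and> card F = k \<and> chromatic_number V (E - F) = chromatic_number V E - 1"
    using ex_edge_deletion_chromatic_number_eq[OF assms(1)] by blast
  then have "\<exists>F. F \<subseteq> E \<and> card F = es_chi V E \<and>
      chromatic_number V (E - F) = chromatic_number V E - 1"
    unfolding es_chi_def by (rule LeastI_ex)
  then show ?thesis
    using that by blast
qed

lemma vs_chi_witness:
  assumes "simple_graph V E"
  obtains S where "S \<subseteq> V" "card S = vs_chi V E"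
    "chromatic_number (V - S) (delete_vertices V E S) = chromatic_number V E - 1"
proof -
  have "colourable (V - V) (delete_vertices V E V) 0"
    unfolding colourable_def delete_vertices_all[OF assms] by simp
  then have "chromatic_number (V - V) (delete_vertices V E V) \<le> chromatic_number V E - 1"
    using chromatic_number_le by fastforce
  then have "\<exists>k S. S \<subseteq> V \<and> card S = k \<and>
      chromatic_number (V - S) (delete_vertices V E S) = chromatic_number V E - 1"
    using ex_vertex_deletion_chromatic_number_eq[OF assms] by blast
  then have "\<exists>S. S \<subseteq> V \<and> card S = vs_chi V E \<and>
      chromatic_number (V - S) (delete_vertices V E S) = chromatic_number V E - 1"
    unfolding vs_chi_def by (rule LeastI_ex)
  then show ?thesis
    using that by blast
qed

lemma vs_chi_le_es_chi:
  assumes G: "simple_graph V E" and "E \<noteq> {}"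
  shows "vs_chi V E \<le> es_chi V E"
proof -
  obtain F where F: "F \<subseteq> E" "card F = es_chi V E"
      "chromatic_number V (E - F) = chromatic_number V E - 1"
    using es_chi_witness[OF assms] .
  define S where "S = (\<lambda>e. SOME u. u \<in> e) ` F"
  have endpoint: "(SOME u. u \<in> e) \<in> e" if "e \<in> E" for e
    using G that by (metis insertI1 simple_graph_edgeE someI)
  have "S \<subseteq> V"
    unfolding S_def using endpoint F(1) simple_graph_edge_subset[OF G] by blast
  have "delete_vertices V E S \<subseteq> E - F"
    unfolding S_def delete_vertices_def using endpoint F(1) by blast
  have "colourable (V - S) (delete_vertices V E S) (chromatic_number V (E - F))"
    by (rule colourable_mono[OF colourable_chromatic_number[OF simple_graph_Diff_edges[OF G]]])
      (use \<open>delete_vertices V E S \<subseteq> E - F\<close> in auto)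
  then have "vs_chi V E \<le> card S"
    using F(3) by (intro vs_chi_le[OF G \<open>S \<subseteq> V\<close>]) (metis chromatic_number_le)
  also have "\<dots> \<le> card F"
    unfolding S_def by (rule card_image_le)
      (use F(1) simple_graph_finite_edges[OF G] finite_subset in blast)
  finally show ?thesis
    using F(2) by simp
qed

lemma ex_colour_class_card_le_1:
  fixes f :: "'a \<Rightarrow> nat"
  assumes "finite N" "card N < 2 * m"
  shows "\<exists>j<m. card {u\<in>N. f u = j} \<le> 1"
proof (rule ccontr)
  assume "\<not> ?thesis"
  then have "(\<Sum>j<m. 2) \<le> (\<Sum>j<m. card {u\<in>N. f u = j})"
    by (intro sum_mono) force
  also have "\<dots> = card (\<Union>j<m. {u\<in>N. f u = j})"
    using assms(1) by (intro card_UN_disjoint[symmetric]) auto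
  also have "\<dots> \<le> card N"
    using assms(1) by (intro card_mono) auto
  finally show False
    using assms(2) by simp
qed

lemma colourable_extend_vertex:
  assumes "finite E" "degree E x < 2 * m"
    and "colourable (V - insert x S) (delete_vertices V E (insert x S)) m"
  shows "\<exists>X\<subseteq>E. card X \<le> 1 \<and> colourable (V - S) (delete_vertices V (E - X) S) m"
proof -
  obtain f where f_lt: "\<forall>v\<in>V - insert x S. f v < m"
    and f_proper: "\<forall>u v. {u, v} \<in> delete_vertices V E (insert x S) \<longrightarrow> u \<noteq> v \<longrightarrow> f u \<noteq> f v"
    using assms(3) unfolding colourable_def by blast
  define N where "N = {u. {x, u} \<in> E \<and> u \<notin> S}"
  have inj: "inj_on (\<lambda>u. {x, u}) N"
    by (auto simp: inj_on_def doubleton_eq_iff)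
  have img: "(\<lambda>u. {x, u}) ` N \<subseteq> {e \<in> E. x \<in> e}"
    unfolding N_def by auto
  have "finite {e \<in> E. x \<in> e}"
    using assms(1) by simp
  then have "card N \<le> degree E x" and "finite N"
    unfolding degree_def using card_inj_on_le[OF inj img] finite_imageD[OF finite_subset[OF img] inj]
    by auto
  then obtain j where j: "j < m" "card {u\<in>N. f u = j} \<le> 1"
    using ex_colour_class_card_le_1[of N m f] assms(2) by auto
  define X where "X = (\<lambda>u. {x, u}) ` {u\<in>N. f u = j}"
  have "X \<subseteq> E"
    unfolding X_def N_def by auto
  moreover have "card X \<le> 1"
    unfolding X_def using card_image_le[of "{u\<in>N. f u = j}" "\<lambda>u. {x, u}"] \<open>finite N\<close> j(2)
    by simp
  moreover have "(f(x := j)) u \<noteq> (f(x := j)) v"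
    if uv: "{u, v} \<in> delete_vertices V (E - X) S" "u \<noteq> v" for u v
  proof -
    have neighbour: "f w \<noteq> j" if "{x, w} \<in> E - X" "w \<notin> S" for w
      using that unfolding X_def N_def by auto
    have "u \<notin> S" "v \<notin> S" "{u, v} \<in> E - X"
      using uv(1) unfolding delete_vertices_def by auto
    moreover have "{v, u} = {u, v}"
      by (rule insert_commute)
    moreover have "{u, v} \<in> delete_vertices V E (insert x S)" if "u \<noteq> x" "v \<noteq> x"
      using uv(1) that unfolding delete_vertices_def by auto
    ultimately show ?thesis
      using neighbour[of u] neighbour[of v] f_proper uv(2) by (cases "u = x"; cases "v = x") auto
  qed
  moreover have "\<forall>v\<in>V - S. (f(x := j)) v < m"
    using f_lt j(1) by auto
  ultimately show ?thesis
    unfolding colourable_def by (intro exI[of _ X]) blast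
qed

lemma colourable_extend_vertices:
  assumes "finite S" "finite E" "\<forall>x\<in>S. degree E x < 2 * m"
    and "colourable (V - S) (delete_vertices V E S) m"
  shows "\<exists>F\<subseteq>E. card F \<le> card S \<and> colourable V (E - F) m"
  using assms
proof (induction S arbitrary: E rule: finite_induct)
  case empty
  then show ?case
    by (intro exI[of _ "{}"]) simp
next
  case (insert x S)
  have "degree E x < 2 * m"
    using insert.prems(2) by simp
  then obtain X where X: "X \<subseteq> E" "card X \<le> 1"
      "colourable (V - S) (delete_vertices V (E - X) S) m"
    using colourable_extend_vertex[OF insert.prems(1) _ insert.prems(3)] by blast
  have "degree (E - X) y \<le> degree E y" for y
    unfolding degree_def using insert.prems(1) by (intro card_mono) auto
  then have "\<forall>y\<in>S. degree (E - X) y < 2 * m"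
    using insert.prems(2) by (meson insertCI le_less_trans)
  moreover have "finite (E - X)"
    using insert.prems(1) by simp
  ultimately obtain F where F: "F \<subseteq> E - X" "card F \<le> card S" "colourable V (E - X - F) m"
    using insert.IH X(3) by blast
  have "card (X \<union> F) \<le> card (insert x S)"
    using card_Un_le[of X F] X(2) F(2) insert.hyps by simp
  moreover have "E - (X \<union> F) = E - X - F"
    by blast
  ultimately show ?case
    using X(1) F(1,3) by (intro exI[of _ "X \<union> F"]) auto
qed

lemma es_chi_le_vs_chi:
  assumes G: "simple_graph V E"
    and degree_lt: "\<forall>x\<in>V. degree E x < 2 * (chromatic_number V E - 1)"
  shows "es_chi V E \<le> vs_chi V E"
proof -
  obtain S where S: "S \<subseteq> V" "card S = vs_chi V E"
      "chromatic_number (V - S) (delete_vertices V E S) = chromatic_number V E - 1"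
    using vs_chi_witness[OF G] .
  have "finite S"
    using S(1) simple_graph_finite_vertices[OF G] by (rule finite_subset)
  moreover have "\<forall>x\<in>S. degree E x < 2 * (chromatic_number V E - 1)"
    using S(1) degree_lt by blast
  moreover have "colourable (V - S) (delete_vertices V E S) (chromatic_number V E - 1)"
    using colourable_chromatic_number[OF simple_graph_delete_vertices[OF G], of S] S(3) by simp
  ultimately have "\<exists>F\<subseteq>E. card F \<le> card S \<and> colourable V (E - F) (chromatic_number V E - 1)"
    by (rule colourable_extend_vertices[OF _ simple_graph_finite_edges[OF G]])
  then obtain F where F: "F \<subseteq> E" "card F \<le> card S"
      "colourable V (E - F) (chromatic_number V E - 1)"
    by blast
  have "es_chi V E \<le> card F"
    using F(1) chromatic_number_le[OF F(3)] by (rule es_chi_le[OF G])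
  then show ?thesis
    using F(2) S(2) by simp
qed

theorem theorem4:
  fixes V :: "'a set" and E :: "'a set set"
  assumes "simple_graph V E"
    and "E \<noteq> {}"
    and "real (chromatic_number V E) > real (max_degree V E) / 2 + 1"
  shows "vs_chi V E = es_chi V E"
proof (rule antisym)
  show "vs_chi V E \<le> es_chi V E"
    using assms(1,2) by (rule vs_chi_le_es_chi)
  have "max_degree V E < 2 * (chromatic_number V E - 1)"
    using assms(3) by linarith
  moreover have "degree E x \<le> max_degree V E" if "x \<in> V" for x
    unfolding max_degree_def using that simple_graph_finite_vertices[OF assms(1)] by simp
  ultimately show "es_chi V E \<le> vs_chi V E"
    by (intro es_chi_le_vs_chi[OF assms(1)] ballI) (meson le_less_trans)
qed

end
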